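(* Let $d\ge1$ and let $P(x_1,\dots,x_d)$ be a polynomial such that for every $\mathcal{X}\subseteq\{1,\dots,d\}$ the monomial $\prod_{j\in\mathcal{X}}x_j$ has a positive coefficient, and every other monomial has coefficient zero. Let $K(\mathbf{t})=\log P(e^{t_1},\dots,e^{t_d})$. Then $P$ has full rank and is aperiodic. Moreover, for every $\boldsymbol\lambda\in(0,1)^d$ and every $\boldsymbol\ell$ on the boundary of $[-\infty,+\infty]^d$, $K(\mathbf{t})-\boldsymbol\lambda^T\mathbf{t}\to+\infty$ as $\mathbf{t}\to\boldsymbol\ell$. Consequently there exists a unique $\boldsymbol\tau\in\mathbb{R}^d$ at which the gradient of $\mathbf{t}\mapsto K(\mathbf{t})-\boldsymbol\lambda^T\mathbf{t}$ vanishes.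
   Context: For a multivariate power series $B(\mathbf{z})$ in $d$ variables, its support is $S_B=\{\mathbf{n}\in\mathbb{Z}_{\ge0}^d:[\mathbf{z}^{\mathbf{n}}]B\neq0\}$ and $\Delta(S_B)=\{\mathbf{n}-\mathbf{m}:\mathbf{n},\mathbf{m}\in S_B\}$. $B$ has full rank if the real vector space spanned by $\Delta(S_B)$ has dimension $d$. For an integer $q\ge2$, $B$ is $q$-periodic if there exist nonnegative integers $p_1,\dots,p_d$, not all divisible by $q$, and an integer $r$ such that $\{\mathbf{p}^T\mathbf{n}:\mathbf{n}\in S_B\}\subseteq r+q\mathbb{Z}_{\ge0}$; $B$ is aperiodic if it is not $q$-periodic for any $q\ge2$. *)

theory Defs
  imports "HOL-Analysis.Analysis"
begin

text \<open>A multivariate power series in d variables is represented by its coefficient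
  function on exponent vectors \<open>'d \<Rightarrow> nat\<close>; the number of variables is d = CARD('d).\<close>

type_synonym 'd mpseries = "('d \<Rightarrow> nat) \<Rightarrow> real"

definition supp :: "'d mpseries \<Rightarrow> ('d \<Rightarrow> nat) set" where
  "supp B = {n. B n \<noteq> 0}"

definition diffset :: "'d mpseries \<Rightarrow> (real ^ 'd) set" where
  "diffset B = {(\<chi> j. real (n j) - real (m j)) | n m. n \<in> supp B \<and> m \<in> supp B}"

definition full_rank :: "('d::finite) mpseries \<Rightarrow> bool" where
  "full_rank B \<longleftrightarrow> dim (span (diffset B)) = CARD('d)"

definition q_periodic :: "nat \<Rightarrow> ('d::finite) mpseries \<Rightarrow> bool" where
  "q_periodic q B \<longleftrightarrow> (\<exists>p :: 'd \<Rightarrow> nat. \<exists>r :: int.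
      (\<exists>j. \<not> q dvd p j) \<and>
      (\<forall>n \<in> supp B. \<exists>k :: nat. int (\<Sum>j\<in>UNIV. p j * n j) = r + int q * int k))"

definition aperiodic :: "('d::finite) mpseries \<Rightarrow> bool" where
  "aperiodic B \<longleftrightarrow> (\<forall>q\<ge>2. \<not> q_periodic q B)"

text \<open>Exponent vector of the squarefree monomial \<open>\<Prod>j\<in>X. x_j\<close>.\<close>
definition sqf_exp :: "'d set \<Rightarrow> ('d \<Rightarrow> nat)" where
  "sqf_exp X = (\<lambda>j. if j \<in> X then 1 else 0)"

text \<open>\<open>K(t) = log P(e^{t_1},\<dots>,e^{t_d})\<close> for a multiaffine polynomial P (all other coefficients zero).\<close>
definition Kfun :: "('d::finite) mpseries \<Rightarrow> real ^ 'd \<Rightarrow> real" where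
  "Kfun P t = ln (\<Sum>X\<in>(UNIV :: 'd set set). P (sqf_exp X) * exp (\<Sum>j\<in>X. t $ j))"

text \<open>Convergence \<open>t \<rightarrow> \<ell>\<close> in \<open>[-\<infinity>,+\<infinity>]^d\<close>: componentwise convergence in the extended reals.\<close>
definition to_evec :: "ereal ^ 'd \<Rightarrow> (real ^ 'd) filter" where
  "to_evec l = (INF j\<in>(UNIV :: 'd set). filtercomap (\<lambda>t. ereal (t $ j)) (nhds (l $ j)))"

definition ebox_boundary :: "(ereal ^ 'd) set" where
  "ebox_boundary = {l. \<exists>j. l $ j = \<infinity> \<or> l $ j = -\<infinity>}"

end

theory Submission
  imports Defs
begin

(* The support of P consists of the 0/1 vectors; since it contains 0 and the unit vectors, P has
   full rank and is aperiodic.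

   Keeping only the monomial indexed by {j. t_j >= 0} gives
   K(t) - lam.t >= c + sum_j min(lam_j, 1 - lam_j) |t_j|, so K(t) - lam.t is coercive: it tends to
   +infinity at the boundary and attains a minimum, which is a critical point.

   The gradient of K at t is the mean of the indicator vector of X under the weights
   w_t(X) = P_X e^(sum_{j in X} t_j) / P(e^t). If t and s have the same gradient, then
   sum_X (w_t(X) - w_s(X)) (ln w_t(X) - ln w_s(X)) = 0, because ln w_t - ln w_s is affine in the
   indicator of X. All terms are nonnegative, so w_t = w_s, and comparing the weights of the
   empty set and of the singletons gives t = s. *)

lemma mult_diff_ln_diff_pos:
  fixes x y :: real
  assumes "0 < x" "0 < y" "x \<noteq> y"
  shows "0 < (x - y) * (ln x - ln y)"
  using assms by (cases "x < y") (simp_all add: mult_pos_pos mult_neg_neg)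

lemma mult_diff_ln_diff_nonneg:
  fixes x y :: real
  assumes "0 < x" "0 < y"
  shows "0 \<le> (x - y) * (ln x - ln y)"
  using assms mult_diff_ln_diff_pos[of x y] by (cases "x = y") simp_all

lemma min_mult_abs_le_pos_part_minus_mult:
  fixes a c x :: real
  assumes "c \<le> a" "c \<le> 1 - a"
  shows "c * \<bar>x\<bar> \<le> max x 0 - a * x"
proof (cases "x \<ge> 0")
  case True
  then have "c * \<bar>x\<bar> \<le> (1 - a) * x" using assms(2) by (simp add: mult_right_mono)
  then show ?thesis using True by (simp add: algebra_simps)
next
  case False
  then have "c * \<bar>x\<bar> \<le> a * - x" using assms(1) by (simp add: mult_right_mono)
  then show ?thesis using False by simp
qed

lemma coercive_attains_min:
  fixes f :: "'a::euclidean_space \<Rightarrow> real"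
  assumes "continuous_on UNIV f" "\<mu> > 0" "\<And>x. m + \<mu> * norm x \<le> f x"
  obtains x where "\<And>y. f x \<le> f y"
proof -
  define K where "K = {x. f x \<le> f 0}"
  have "K \<subseteq> cball 0 ((f 0 - m) / \<mu>)"
  proof
    fix x assume "x \<in> K"
    then have "\<mu> * norm x \<le> f 0 - m" using assms(3)[of x] by (simp add: K_def)
    then show "x \<in> cball 0 ((f 0 - m) / \<mu>)" using assms(2) by (simp add: field_simps)
  qed
  moreover have "closed K"
    unfolding K_def by (rule closed_Collect_le[OF assms(1) continuous_on_const])
  ultimately have "compact K"
    by (metis bounded_cball bounded_subset compact_eq_bounded_closed)
  moreover have "0 \<in> K" by (simp add: K_def)
  ultimately obtain x where min_on_K: "\<And>y. y \<in> K \<Longrightarrow> f x \<le> f y"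
    using continuous_attains_inf[of K f] continuous_on_subset[OF assms(1)] by blast
  have "f x \<le> f 0"
    using min_on_K \<open>0 \<in> K\<close> by blast
  then have "f x \<le> f y" for y
    using min_on_K[of y] by (force simp: K_def)
  then show ?thesis using that by blast
qed

lemma filterlim_norm_to_evec:
  fixes l :: "ereal ^ 'd"
  assumes "l \<in> ebox_boundary"
  shows "filterlim norm at_top (to_evec l)"
  unfolding filterlim_at_top
proof
  fix Z :: real
  obtain j where j: "l $ j = \<infinity> \<or> l $ j = -\<infinity>"
    using assms unfolding ebox_boundary_def by blast
  have "eventually (\<lambda>y. y \<in> {ereal Z<..} \<union> {..<ereal (- Z)}) (nhds (l $ j))"
    by (rule eventually_nhds_in_open) (use j in auto)
  then have "eventually (\<lambda>t. Z \<le> \<bar>t $ j\<bar>) (filtercomap (\<lambda>t. ereal (t $ j)) (nhds (l $ j)))"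
    unfolding eventually_filtercomap by (intro exI conjI, assumption) auto
  moreover have "to_evec l \<le> filtercomap (\<lambda>t. ereal (t $ j)) (nhds (l $ j))"
    unfolding to_evec_def by (rule INF_lower) simp
  ultimately have "eventually (\<lambda>t. Z \<le> \<bar>t $ j\<bar>) (to_evec l)"
    using filter_leD by blast
  then show "eventually (\<lambda>t. Z \<le> norm t) (to_evec l)"
    by (rule eventually_mono) (use component_le_norm_cart order_trans in blast)
qed

lemma full_rank_if_units_in_supp:
  fixes B :: "('d::finite) mpseries"
  assumes "sqf_exp {} \<in> supp B" and "\<And>i. sqf_exp {i} \<in> supp B"
  shows "full_rank B"
proof -
  have "Basis \<subseteq> diffset B"
  proof
    fix v :: "real^'d" assume "v \<in> Basis"
    then obtain i where v: "v = axis i 1" by (auto simp: Basis_vec_def)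
    have "v = (\<chi> j. real (sqf_exp {i} j) - real (sqf_exp {} j))"
      by (auto simp: v axis_def sqf_exp_def vec_eq_iff)
    then show "v \<in> diffset B" unfolding diffset_def using assms by blast
  qed
  then have "span (diffset B) = UNIV"
    by (metis span_Basis span_mono top.extremum_uniqueI)
  then show ?thesis
    unfolding full_rank_def using dim_eq_full by simp
qed

lemma aperiodic_if_units_in_supp:
  fixes B :: "('d::finite) mpseries"
  assumes "sqf_exp {} \<in> supp B" and "\<And>i. sqf_exp {i} \<in> supp B"
  shows "aperiodic B"
  unfolding aperiodic_def q_periodic_def
proof (intro allI impI notI, elim exE conjE)
  fix q :: nat and p :: "'d \<Rightarrow> nat" and r :: int and j
  assume "\<not> q dvd p j"
    and periodic: "\<forall>n\<in>supp B. \<exists>k. int (\<Sum>i\<in>UNIV. p i * n i) = r + int q * int k"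
  obtain k0 where "int (\<Sum>i\<in>UNIV. p i * sqf_exp {} i) = r + int q * int k0"
    using periodic assms(1) by blast
  then have k0: "0 = r + int q * int k0"
    by (simp add: sqf_exp_def)
  have "(\<Sum>i\<in>UNIV. p i * sqf_exp {j} i) = p j"
    by (simp add: sqf_exp_def if_distrib cong: if_cong)
  then obtain k1 where k1: "int (p j) = r + int q * int k1"
    using periodic assms(2)[of j] by fastforce
  have "int (p j) = int q * (int k1 - int k0)"
    using k0 k1 by (simp add: algebra_simps)
  then have "q dvd p j"
    by (metis dvd_triv_left int_dvd_int_iff)
  with \<open>\<not> q dvd p j\<close> show False ..
qed

definition eval_exp :: "('d::finite) mpseries \<Rightarrow> real ^ 'd \<Rightarrow> real" where
  "eval_exp P t = (\<Sum>X\<in>UNIV. P (sqf_exp X) * exp (\<Sum>j\<in>X. t $ j))"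

definition exp_weight :: "('d::finite) mpseries \<Rightarrow> real ^ 'd \<Rightarrow> 'd set \<Rightarrow> real" where
  "exp_weight P t X = P (sqf_exp X) * exp (\<Sum>j\<in>X. t $ j) / eval_exp P t"

lemma Kfun_eq_ln_eval_exp: "Kfun P t = ln (eval_exp P t)"
  by (simp add: Kfun_def eval_exp_def)

locale positive_multiaffine =
  fixes P :: "('d::finite) mpseries"
  assumes pos: "\<And>X. P (sqf_exp X) > 0"
begin

lemma sqf_exp_in_supp: "sqf_exp X \<in> supp P"
  using pos[of X] by (simp add: supp_def)

lemma eval_exp_pos:
  "eval_exp P t > 0"
  unfolding eval_exp_def by (rule sum_pos) (simp_all add: pos)

lemma exp_weight_pos:
  "exp_weight P t X > 0"
  unfolding exp_weight_def using pos eval_exp_pos by simp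

lemma sum_exp_weight:
  "(\<Sum>X\<in>UNIV. exp_weight P t X) = 1"
  using eval_exp_pos[of t]
  by (simp add: exp_weight_def eval_exp_def flip: sum_divide_distrib)

lemma ln_exp_weight:
  "ln (exp_weight P t X) = ln (P (sqf_exp X)) + (\<Sum>j\<in>X. t $ j) - Kfun P t"
  using pos[of X] eval_exp_pos[of t]
  by (simp add: exp_weight_def Kfun_eq_ln_eval_exp ln_div ln_mult)

lemma Kfun_ge_monomial:
  "ln (P (sqf_exp X)) + (\<Sum>j\<in>X. t $ j) \<le> Kfun P t"
proof -
  have "exp_weight P t X \<le> 1"
    unfolding sum_exp_weight[of t, symmetric]
    by (rule member_le_sum) (simp_all add: less_imp_le exp_weight_pos)
  then have "ln (exp_weight P t X) \<le> 0"
    using exp_weight_pos by simp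
  then show ?thesis
    unfolding ln_exp_weight by simp
qed

lemma has_derivative_Kfun:
  "(Kfun P has_derivative
     (\<lambda>h. \<Sum>X\<in>UNIV. exp_weight P t X * (\<Sum>j\<in>X. h $ j))) (at t)"
proof -
  have coord_sum: "((\<lambda>t. \<Sum>j\<in>X. t $ j) has_derivative (\<lambda>h. \<Sum>j\<in>X. h $ j)) (at t)" for X
    by (intro has_derivative_sum bounded_linear_imp_has_derivative bounded_linear_vec_nth)
  have exp_coord_sum: "((\<lambda>t. exp (\<Sum>j\<in>X. t $ j)) has_derivative
      (\<lambda>h. exp (\<Sum>j\<in>X. t $ j) * (\<Sum>j\<in>X. h $ j))) (at t)" for X
    using has_derivative_exp[OF coord_sum] by (simp add: mult.commute)
  have "(eval_exp P has_derivative
      (\<lambda>h. \<Sum>X\<in>UNIV. P (sqf_exp X) * (exp (\<Sum>j\<in>X. t $ j) * (\<Sum>j\<in>X. h $ j)))) (at t)"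
    unfolding eval_exp_def
    by (intro has_derivative_sum has_derivative_mult_right exp_coord_sum)
  from DERIV_compose_FDERIV[OF DERIV_ln[OF eval_exp_pos] this]
  show ?thesis
    unfolding Kfun_eq_ln_eval_exp[abs_def] exp_weight_def
    by (simp add: divide_inverse sum_distrib_left sum_distrib_right algebra_simps)
qed

lemma exp_weight_gradient_inj:
  assumes "\<And>h. (\<Sum>X\<in>UNIV. exp_weight P t X * (\<Sum>j\<in>X. h $ j)) =
                 (\<Sum>X\<in>UNIV. exp_weight P s X * (\<Sum>j\<in>X. h $ j))"
  shows "t = s"
proof -
  define w where "w = exp_weight P"
  define a where "a X = (\<Sum>j\<in>X. (t - s) $ j)" for X
  define C where "C = Kfun P t - Kfun P s"
  have ln_ratio: "ln (w t X) - ln (w s X) = a X - C" for X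
    unfolding w_def a_def C_def ln_exp_weight by (simp add: sum_subtractf)
  have "(\<Sum>X\<in>UNIV. (w t X - w s X) * (ln (w t X) - ln (w s X))) =
      (\<Sum>X\<in>UNIV. w t X * a X) - (\<Sum>X\<in>UNIV. w s X * a X)
      - C * ((\<Sum>X\<in>UNIV. w t X) - (\<Sum>X\<in>UNIV. w s X))"
    unfolding ln_ratio
    by (simp add: sum_subtractf sum_distrib_left left_diff_distrib right_diff_distrib mult.commute)
  also have "\<dots> = 0"
    using assms[of "t - s"] sum_exp_weight unfolding w_def a_def by simp
  finally have "\<forall>X\<in>UNIV. (w t X - w s X) * (ln (w t X) - ln (w s X)) = 0"
    by (subst (asm) sum_nonneg_eq_0_iff)
      (simp_all add: mult_diff_ln_diff_nonneg exp_weight_pos w_def)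
  then have "w t X = w s X" for X
    using mult_diff_ln_diff_pos[of "w t X" "w s X"] exp_weight_pos by (force simp: w_def)
  then have lin: "(\<Sum>j\<in>X. (t - s) $ j) = C" for X
    using ln_ratio[of X] by (simp add: a_def)
  from lin[of "{}"] have "C = 0" by simp
  with lin[of "{_}"] show "t = s"
    by (simp add: vec_eq_iff)
qed

lemma Kfun_minus_inner_coercive:
  assumes lam: "\<forall>j. 0 < lam $ j \<and> lam $ j < 1"
  obtains m \<mu> where "\<mu> > 0" "\<And>t. m + \<mu> * norm t \<le> Kfun P t - lam \<bullet> t"
proof -
  define m where "m = Min (range (\<lambda>X. ln (P (sqf_exp X))))"
  define \<mu> where "\<mu> = Min (range (\<lambda>j. min (lam $ j) (1 - lam $ j)))"
  have "\<mu> > 0"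
    unfolding \<mu>_def using lam by (subst Min_gr_iff) auto
  have "\<mu> \<le> min (lam $ j) (1 - lam $ j)" for j
    unfolding \<mu>_def by (rule Min_le) auto
  then have \<mu>_le: "\<mu> \<le> lam $ j" "\<mu> \<le> 1 - lam $ j" for j
    by simp_all
  have bound: "m + \<mu> * norm t \<le> Kfun P t - lam \<bullet> t" for t
  proof -
    define X where "X = {j. 0 \<le> t $ j}"
    have "m \<le> ln (P (sqf_exp X))"
      unfolding m_def by (rule Min_le) auto
    then have "m + (\<Sum>j\<in>X. t $ j) \<le> Kfun P t"
      using Kfun_ge_monomial[of X t] by linarith
    moreover have "(\<Sum>j\<in>X. t $ j) = (\<Sum>j\<in>UNIV. max (t $ j) 0)"
      unfolding X_def by (rule sum.mono_neutral_cong_left) auto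
    then have "(\<Sum>j\<in>X. t $ j) - lam \<bullet> t = (\<Sum>j\<in>UNIV. max (t $ j) 0 - lam $ j * t $ j)"
      by (simp add: inner_vec_def sum_subtractf)
    moreover have "\<mu> * norm t \<le> \<mu> * (\<Sum>j\<in>UNIV. \<bar>t $ j\<bar>)"
      using \<open>\<mu> > 0\<close> norm_le_l1_cart by simp
    moreover have "\<dots> \<le> (\<Sum>j\<in>UNIV. max (t $ j) 0 - lam $ j * t $ j)"
      unfolding sum_distrib_left
      by (intro sum_mono min_mult_abs_le_pos_part_minus_mult \<mu>_le)
    ultimately show ?thesis by linarith
  qed
  show ?thesis
    by (rule that[OF \<open>\<mu> > 0\<close> bound])
qed

lemma filterlim_Kfun_minus_inner:
  assumes "\<forall>j. 0 < lam $ j \<and> lam $ j < 1" and "l \<in> ebox_boundary"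
  shows "filterlim (\<lambda>t. Kfun P t - lam \<bullet> t) at_top (to_evec l)"
proof -
  obtain m \<mu> where "\<mu> > 0" and bound: "\<And>t. m + \<mu> * norm t \<le> Kfun P t - lam \<bullet> t"
    using Kfun_minus_inner_coercive[OF assms(1)] by blast
  have "filterlim (\<lambda>t. m + \<mu> * norm t) at_top (to_evec l)"
    by (intro filterlim_tendsto_add_at_top[OF tendsto_const]
        filterlim_tendsto_pos_mult_at_top[OF tendsto_const \<open>\<mu> > 0\<close>]
        filterlim_norm_to_evec assms(2))
  then show ?thesis
    by (rule filterlim_at_top_mono) (simp add: bound)
qed

lemma ex1_critical_point_Kfun_minus_inner:
  assumes "\<forall>j. 0 < lam $ j \<and> lam $ j < 1"
  shows "\<exists>!tau. ((\<lambda>t. Kfun P t - lam \<bullet> t) has_derivative (\<lambda>h. 0)) (at tau)"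
proof -
  define F where "F = (\<lambda>t. Kfun P t - lam \<bullet> t)"
  define grad where "grad t h = (\<Sum>X\<in>UNIV. exp_weight P t X * (\<Sum>j\<in>X. h $ j))" for t h
  have F_deriv: "(F has_derivative (\<lambda>h. grad t h - lam \<bullet> h)) (at t)" for t
    unfolding F_def grad_def
    by (intro has_derivative_diff has_derivative_Kfun has_derivative_inner_right has_derivative_ident)
  have critical_iff: "(F has_derivative (\<lambda>h. 0)) (at t) \<longleftrightarrow> (\<forall>h. grad t h = lam \<bullet> h)" for t
  proof
    assume "(F has_derivative (\<lambda>h. 0)) (at t)"
    then have "(\<lambda>h. grad t h - lam \<bullet> h) = (\<lambda>h. 0)"
      by (rule has_derivative_unique[OF F_deriv])
    then show "\<forall>h. grad t h = lam \<bullet> h"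
      by (simp add: fun_eq_iff)
  next
    assume "\<forall>h. grad t h = lam \<bullet> h"
    then show "(F has_derivative (\<lambda>h. 0)) (at t)"
      using F_deriv[of t] by simp
  qed
  obtain m \<mu> where "\<mu> > 0" and bound: "\<And>t. m + \<mu> * norm t \<le> F t"
    using Kfun_minus_inner_coercive[OF assms] unfolding F_def by blast
  have "continuous_on UNIV F"
    using F_deriv has_derivative_continuous continuous_at_imp_continuous_on by blast
  then obtain tau where "\<And>t. F tau \<le> F t"
    using coercive_attains_min[OF _ \<open>\<mu> > 0\<close> bound] by blast
  then have "(\<lambda>h. grad tau h - lam \<bullet> h) = (\<lambda>h. 0)"
    by (intro differential_zero_maxmin[OF UNIV_I open_UNIV F_deriv]) simp
  then have "(F has_derivative (\<lambda>h. 0)) (at tau)"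
    using F_deriv[of tau] by simp
  moreover have "t = s" if "(F has_derivative (\<lambda>h. 0)) (at t)" "(F has_derivative (\<lambda>h. 0)) (at s)" for t s
    using that unfolding critical_iff grad_def by (intro exp_weight_gradient_inj) simp
  ultimately show ?thesis
    unfolding F_def by blast
qed

end

theorem lemma9:
  fixes P :: "('d::finite) mpseries"
  assumes pos: "\<And>X. P (sqf_exp X) > 0"
    and zero: "\<And>n. n \<notin> range sqf_exp \<Longrightarrow> P n = 0"
  shows "full_rank P \<and> aperiodic P \<and>
    (\<forall>lam :: real ^ 'd. (\<forall>j. 0 < lam $ j \<and> lam $ j < 1) \<longrightarrow>
       (\<forall>l \<in> ebox_boundary.
          filterlim (\<lambda>t. Kfun P t - lam \<bullet> t) at_top (to_evec l)) \<and>
       (\<exists>!tau :: real ^ 'd. ((\<lambda>t. Kfun P t - lam \<bullet> t) has_derivative (\<lambda>h. 0)) (at tau)))"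
proof -
  interpret positive_multiaffine P
    using pos by unfold_locales
  show ?thesis
    using full_rank_if_units_in_supp aperiodic_if_units_in_supp sqf_exp_in_supp
      filterlim_Kfun_minus_inner ex1_critical_point_Kfun_minus_inner by blast
qed

end
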